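(* Let $0<c_1\le \frac{0.04}{d_{\max}}$ and suppose $t\le c_1 n$. Then for all sufficiently large $n$ and all $0\le k\le c_1 n$, \[ \frac{L}{n-d_{\max}}\cdot \exp\!\left(1-\frac{\sum_{i=1}^x d_i (a_i-t_i)}{n}\right)\le \frac{9}{10},\qquad\text{where } L=\sum_{i=1}^x (a_i-t_i)\, d_i\, e^{d_i k/n}. \]
   Context: Setting: $n$ vertices, a target set $B$ with $|B|=t$, each vertex $v$ has out-degree $d_v$ with $2\le d_{\min}\le d_v\le d_{\max}$ (constants). $d_1,\dots,d_x$ are the distinct out-degrees, $a_i$ is the number of vertices of out-degree $d_i$ (so $\sum_i a_i=n$), and $t_i$ the number of vertices of $B$ of out-degree $d_i$ (so $\sum_i t_i=t$). *)

theory Defs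
  imports Complex_Main
begin

end

theory Submission
  imports Defs
begin

(* Every degree is at least 2 and, as c1 <= 0.04 / dmax <= 0.02, at most a 0.02 fraction of the
   vertices lies in B, so the weighted degree sum D = sum d_i (a_i - t_i) is at least 1.96 n, while each factor
   exp (d_i k / n) is at most exp 0.04, so L <= exp 0.04 * D. Since y * exp (1 - y) decreases
   for y >= 1, D * exp (1 - D/n) is at most 1.96 n exp (-0.96); with n >= 20 dmax the whole
   expression is then at most (1.96 / exp 0.92) * (20/19) < 0.87. *)

lemma exp_092_ge: "2.38 \<le> exp (0.92::real)"
proof -
  have "(2.38::real) \<le> 1.115 ^ 8" by (simp add: power_numeral_reduce)
  also have "\<dots> \<le> exp 0.115 ^ 8"
    using exp_ge_add_one_self[of "0.115::real"] by (intro power_mono) simp_all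
  also have "\<dots> = exp (0.92::real)"
    using exp_of_nat_mult[of 8 "0.115::real"] by simp
  finally show ?thesis .
qed

lemma mult_exp_one_minus_antimono:
  fixes y y0 :: real
  assumes "1 \<le> y0" and "y0 \<le> y"
  shows "y * exp (1 - y) \<le> y0 * exp (1 - y0)"
proof -
  have "y / y0 = 1 + (y - y0) / y0" using assms by (simp add: field_simps)
  also have "\<dots> \<le> exp ((y - y0) / y0)" by (rule exp_ge_add_one_self)
  also have "\<dots> \<le> exp (y - y0)"
    using assms by (simp add: divide_le_eq mult_le_cancel_left1)
  finally have "y \<le> y0 * exp (y - y0)" using assms by (simp add: divide_le_eq mult.commute)
  hence "y * exp (1 - y) \<le> y0 * exp (y - y0) * exp (1 - y)"
    by (rule mult_right_mono) simp
  also have "\<dots> = y0 * exp (1 - y0)" by (simp add: exp_add[symmetric])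
  finally show ?thesis .
qed

lemma sum_mult_ge_min_weight:
  fixes w d :: "'i \<Rightarrow> real"
  assumes "\<And>i. i \<in> A \<Longrightarrow> m \<le> d i" and "\<And>i. i \<in> A \<Longrightarrow> 0 \<le> w i"
  shows "m * sum w A \<le> (\<Sum>i\<in>A. d i * w i)"
  unfolding sum_distrib_left using assms by (intro sum_mono mult_right_mono) auto

lemma sum_mult_exp_le:
  fixes w f :: "'i \<Rightarrow> real"
  assumes "\<And>i. i \<in> A \<Longrightarrow> 0 \<le> w i" and "\<And>i. i \<in> A \<Longrightarrow> f i \<le> b"
  shows "(\<Sum>i\<in>A. w i * exp (f i)) \<le> exp b * sum w A"
  unfolding sum_distrib_left
proof (rule sum_mono)
  fix i assume "i \<in> A"
  with assms have "w i * exp (f i) \<le> w i * exp b" by (intro mult_left_mono) auto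
  then show "w i * exp (f i) \<le> exp b * w i" by (simp add: mult.commute)
qed

lemma ratio_exp_bound:
  fixes L D n dm :: real
  assumes LD: "L \<le> exp 0.04 * D" and Dn: "1.96 * n \<le> D"
    and n: "20 * dm \<le> n" and dm: "0 < dm"
  shows "L / (n - dm) * exp (1 - D / n) \<le> 9 / 10"
proof -
  have nd: "0 < n - dm" and npos: "0 < n" using n dm by linarith+
  have "D * exp (1 - D / n) = n * (D / n * exp (1 - D / n))" using npos by simp
  also have "\<dots> \<le> n * (1.96 * exp (1 - 1.96))"
  proof (intro mult_left_mono mult_exp_one_minus_antimono)
    show "1.96 \<le> D / n" using npos Dn by (simp add: le_divide_eq)
  qed (use npos in auto)
  finally have DE: "D * exp (1 - D / n) \<le> n * (1.96 * exp (-0.96))" by simp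
  have "L / (n - dm) * exp (1 - D / n) = L * exp (1 - D / n) / (n - dm)" by simp
  also have "\<dots> \<le> exp 0.04 * D * exp (1 - D / n) / (n - dm)"
    using LD nd by (intro divide_right_mono mult_right_mono) auto
  also have "\<dots> \<le> exp 0.04 * (n * (1.96 * exp (-0.96))) / (n - dm)"
    using DE nd by (simp only: mult.assoc, intro divide_right_mono mult_left_mono) auto
  also have "\<dots> = 1.96 * (exp 0.04 * exp (-0.96)) * (n / (n - dm))" by simp
  also have "\<dots> = 1.96 * exp (-0.92) * (n / (n - dm))" by (simp flip: exp_add)
  also have "\<dots> \<le> 1.96 * (1 / 2.38) * (20 / 19)"
  proof (intro mult_mono)
    have "exp (-0.92::real) = 1 / exp 0.92" by (simp add: exp_minus field_simps)
    also have "\<dots> \<le> 1 / 2.38" using exp_092_ge by (intro divide_left_mono) auto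
    finally show "exp (-0.92::real) \<le> 1 / 2.38" .
    show "n / (n - dm) \<le> 20 / 19" using nd n by (simp add: divide_le_eq)
  qed (use nd npos in auto)
  also have "\<dots> \<le> 9 / 10" by simp
  finally show ?thesis .
qed
lemma lemma6_fixed_size:
  fixes dmin dmax :: nat and c1 :: real
  assumes dmin: "2 \<le> dmin" "dmin \<le> dmax" and c1: "0 < c1" "c1 \<le> 0.04 / real dmax"
    and n: "20 * dmax \<le> n"
    and deg: "\<And>i. i \<in> {1..x} \<Longrightarrow> dmin \<le> d i \<and> d i \<le> dmax \<and> ts i \<le> a i"
    and sa: "(\<Sum>i=1..x. a i) = n" and st: "(\<Sum>i=1..x. ts i) = t"
    and tn: "real t \<le> c1 * real n" and kn: "real k \<le> c1 * real n"
  shows "(\<Sum>i=1..x. real (a i - ts i) * real (d i) * exp (real (d i) * real k / real n))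
           / (real n - real dmax)
         * exp (1 - (\<Sum>i=1..x. real (d i) * real (a i - ts i)) / real n) \<le> 9 / 10"
proof -
  define S where "S i = real (a i - ts i)" for i
  have S_nonneg: "0 \<le> S i" for i by (simp add: S_def)
  have dmax2: "2 \<le> real dmax" using dmin by simp
  have c1_dmax: "c1 * real dmax \<le> 0.04" using c1 dmax2 by (simp add: le_divide_eq)
  moreover have "c1 * 2 \<le> c1 * real dmax" using c1 dmax2 by simp
  ultimately have "c1 * real n \<le> 0.02 * real n" by (intro mult_right_mono) auto
  with tn have t_small: "real t \<le> 0.02 * real n" by linarith
  have "(\<Sum>i=1..x. S i) = real n - real t"
    using sa st deg by (simp add: S_def of_nat_diff sum_subtractf flip: of_nat_sum)
  moreover have "2 * (\<Sum>i=1..x. S i) \<le> (\<Sum>i=1..x. real (d i) * S i)"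
  proof (rule sum_mult_ge_min_weight[OF _ S_nonneg])
    fix i assume "i \<in> {1..x}"
    with deg dmin show "2 \<le> real (d i)" by force
  qed
  ultimately have D_large: "1.96 * real n \<le> (\<Sum>i=1..x. real (d i) * S i)"
    using t_small by simp
  have "real (d i) * real k / real n \<le> 0.04" if "i \<in> {1..x}" for i
  proof -
    have "real (d i) * real k \<le> real dmax * (c1 * real n)"
      using deg[OF that] kn by (intro mult_mono) auto
    also have "\<dots> = (c1 * real dmax) * real n" by simp
    also have "\<dots> \<le> 0.04 * real n" using c1_dmax by (intro mult_right_mono) auto
    finally show ?thesis by (simp add: divide_le_eq)
  qed
  then have "(\<Sum>i=1..x. S i * real (d i) * exp (real (d i) * real k / real n))
               \<le> exp 0.04 * (\<Sum>i=1..x. S i * real (d i))"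
    by (intro sum_mult_exp_le) (simp_all add: S_nonneg)
  also have "\<dots> = exp 0.04 * (\<Sum>i=1..x. real (d i) * S i)"
    by (simp add: mult.commute)
  finally have L_bound: "(\<Sum>i=1..x. S i * real (d i) * exp (real (d i) * real k / real n))
               \<le> exp 0.04 * (\<Sum>i=1..x. real (d i) * S i)" .
  have "20 * real dmax \<le> real n" using n by simp
  from ratio_exp_bound[OF L_bound D_large this] dmax2 show ?thesis
    by (simp add: S_def)
qed
theorem lemma6:
  fixes dmin dmax :: nat and c1 :: real
  assumes "2 \<le> dmin" and "dmin \<le> dmax"
    and "0 < c1" and "c1 \<le> 0.04 / real dmax"
  shows "\<exists>N. \<forall>n\<ge>N. \<forall>(x::nat) (d::nat \<Rightarrow> nat) (a::nat \<Rightarrow> nat) (ts::nat \<Rightarrow> nat) (t::nat) (k::nat).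
     inj_on d {1..x}
     \<and> (\<forall>i\<in>{1..x}. dmin \<le> d i \<and> d i \<le> dmax \<and> 1 \<le> a i \<and> ts i \<le> a i)
     \<and> (\<Sum>i=1..x. a i) = n
     \<and> (\<Sum>i=1..x. ts i) = t
     \<and> real t \<le> c1 * real n
     \<and> real k \<le> c1 * real n
     \<longrightarrow> (\<Sum>i=1..x. real (a i - ts i) * real (d i) * exp (real (d i) * real k / real n))
           / (real n - real dmax)
         * exp (1 - (\<Sum>i=1..x. real (d i) * real (a i - ts i)) / real n) \<le> 9 / 10"
  using lemma6_fixed_size[OF assms] by blast

end
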